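(* Let $(S,\wedge,\vee)$ be a skew lattice. For all $x,y,z\in S$, \[ (x\lfloor y\rfloor)\lfloor\, y\lfloor z\rfloor\,\rfloor = x\lfloor\, y\lfloor z\rfloor\,\rfloor . \]
   Context: A skew lattice is a set $S$ with two binary operations $\wedge,\vee$, each idempotent and associative, satisfying the absorption laws $x\wedge(x\vee y)=x=x\vee(x\wedge y)$ and $(x\wedge y)\vee y=y=(x\vee y)\wedge y$ for all $x,y\in S$. For $x,y$ in a skew lattice, the lower update of $x$ by $y$ is $x\lfloor y\rfloor=(y\wedge x\wedge y)\vee x\vee(y\wedge x\wedge y)$. *)

theory Defs
  imports Main
begin

definition skew_lattice :: "'a set \<Rightarrow> ('a \<Rightarrow> 'a \<Rightarrow> 'a) \<Rightarrow> ('a \<Rightarrow> 'a \<Rightarrow> 'a) \<Rightarrow> bool" where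
  "skew_lattice S meet join \<longleftrightarrow>
     (\<forall>x\<in>S. \<forall>y\<in>S. meet x y \<in> S \<and> join x y \<in> S) \<and>
     (\<forall>x\<in>S. meet x x = x \<and> join x x = x) \<and>
     (\<forall>x\<in>S. \<forall>y\<in>S. \<forall>z\<in>S. meet (meet x y) z = meet x (meet y z) \<and>
                          join (join x y) z = join x (join y z)) \<and>
     (\<forall>x\<in>S. \<forall>y\<in>S. meet x (join x y) = x \<and> join x (meet x y) = x \<and>
                    join (meet x y) y = y \<and> meet (join x y) y = y)"

definition lower_update :: "('a \<Rightarrow> 'a \<Rightarrow> 'a) \<Rightarrow> ('a \<Rightarrow> 'a \<Rightarrow> 'a) \<Rightarrow> 'a \<Rightarrow> 'a \<Rightarrow> 'a" where
  "lower_update meet join x y =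
     join (join (meet (meet y x) y) x) (meet (meet y x) y)"

end

(*
  Both reducts of a skew lattice are regular bands, x \<wedge> y \<wedge> x \<wedge> z \<wedge> x = x \<wedge> y \<wedge> z \<wedge> x,
  and x \<wedge> y \<wedge> x = x iff y \<vee> x \<vee> y = y. Put u = y \<wedge> x \<wedge> y, a = x\<lfloor>y\<rfloor> = u \<vee> x \<vee> u and
  w = y\<lfloor>z\<rfloor>. Then a lies in the D-class of x above u, which forces y \<wedge> a \<wedge> y = u; as w is
  D-related to y, also w \<wedge> a \<wedge> w = w \<wedge> x \<wedge> w =: v. Finally u \<wedge> v \<wedge> u = u, i.e.
  v \<vee> u \<vee> v = v, so a\<lfloor>w\<rfloor> = v \<vee> u \<vee> x \<vee> u \<vee> v = v \<vee> x \<vee> v = x\<lfloor>w\<rfloor>.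
*)
theory Submission
  imports Defs
begin

locale total_skew_lattice =
  fixes meet :: "'a \<Rightarrow> 'a \<Rightarrow> 'a" (infixr "\<wedge>" 70)
    and join :: "'a \<Rightarrow> 'a \<Rightarrow> 'a" (infixr "\<vee>" 65)
  assumes meet_idem: "x \<wedge> x = x"
    and join_idem: "x \<vee> x = x"
    and meet_assoc: "(x \<wedge> y) \<wedge> z = x \<wedge> y \<wedge> z"
    and join_assoc: "(x \<vee> y) \<vee> z = x \<vee> y \<vee> z"
    and meet_join_absorb: "x \<wedge> (x \<vee> y) = x"
    and join_meet_absorb: "x \<vee> (x \<wedge> y) = x"
    and join_meet_absorb': "(x \<wedge> y) \<vee> y = y"
    and meet_join_absorb': "(x \<vee> y) \<wedge> y = y"
begin

sublocale dual: total_skew_lattice join meet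
  by unfold_locales
    (fact join_idem meet_idem join_assoc meet_assoc join_meet_absorb meet_join_absorb
      meet_join_absorb' join_meet_absorb')+

definition D_rel :: "'a \<Rightarrow> 'a \<Rightarrow> bool" where
  "D_rel x y \<longleftrightarrow> x \<wedge> y \<wedge> x = x \<and> y \<wedge> x \<wedge> y = y"

abbreviation update :: "'a \<Rightarrow> 'a \<Rightarrow> 'a" where
  "update \<equiv> lower_update (\<wedge>) (\<vee>)"

lemma update_eq: "update x y = (y \<wedge> x \<wedge> y) \<vee> x \<vee> (y \<wedge> x \<wedge> y)"
  by (simp add: lower_update_def meet_assoc join_assoc)

lemma meet_left_idem: "x \<wedge> x \<wedge> y = x \<wedge> y"
  by (metis meet_assoc meet_idem)

lemma meet_repeat: "x \<wedge> y \<wedge> x \<wedge> y \<wedge> z = x \<wedge> y \<wedge> z"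
  by (metis meet_assoc meet_idem)

lemma meet_join_meet_cancel: "a \<wedge> (b \<vee> c) \<wedge> (a \<vee> d) \<wedge> c = a \<wedge> c"
  by (metis meet_assoc join_meet_absorb' meet_join_absorb meet_join_absorb')

lemma join_meet_meet_join_meet: "((x \<wedge> y) \<vee> x) \<wedge> (x \<vee> z) \<wedge> x = x"
proof -
  have "x \<wedge> ((x \<wedge> y) \<vee> x) = (x \<wedge> y) \<vee> x"
    by (metis join_meet_absorb join_assoc meet_join_absorb' join_idem)
  then show ?thesis
    using meet_join_meet_cancel[of x "x \<wedge> y" x z] by (simp add: meet_idem flip: meet_assoc)
qed

lemma meet_regular: "x \<wedge> y \<wedge> x \<wedge> z \<wedge> x = x \<wedge> y \<wedge> z \<wedge> x"
proof -
  (* w swallows z \<wedge> x from the left, yet x \<wedge> y cannot tell w from x. *)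
  define w where "w = x \<vee> (z \<wedge> x)"
  have "w \<vee> x = x"
    by (simp add: w_def join_assoc join_meet_absorb' join_idem)
  then have "w \<wedge> x = w"
    by (metis meet_join_absorb)
  moreover have "x \<vee> w = w"
    by (simp add: w_def flip: join_assoc add: join_idem)
  ultimately have "x \<wedge> y \<wedge> w = x \<wedge> y \<wedge> ((x \<wedge> y) \<vee> x) \<wedge> (x \<vee> w) \<wedge> x"
    by (metis meet_assoc meet_join_absorb)
  also have "\<dots> = x \<wedge> y \<wedge> x"
    using join_meet_meet_join_meet by (simp flip: meet_assoc)
  finally have "x \<wedge> y \<wedge> w = x \<wedge> y \<wedge> x" .
  moreover have "w \<wedge> z \<wedge> x = z \<wedge> x"
    by (metis w_def meet_assoc meet_join_absorb')
  ultimately show ?thesis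
    by (metis meet_assoc)
qed

lemma meet_sandwich_imp_join_sandwich:
  assumes "x \<wedge> y \<wedge> x = x"
  shows "y \<vee> x \<vee> y = y"
proof -
  have "(x \<wedge> y) \<vee> x = x \<wedge> y"
    by (metis assms join_meet_absorb meet_assoc)
  then have "(x \<wedge> y) \<vee> x \<vee> y = y"
    by (metis join_assoc join_meet_absorb')
  then have "y \<wedge> (x \<vee> y) = x \<vee> y"
    by (metis meet_join_absorb')
  then show ?thesis
    by (metis join_meet_absorb)
qed

lemma meet_sandwich_expand:
  assumes "v \<wedge> u \<wedge> v = v"
  shows "v \<wedge> u \<wedge> x \<wedge> u \<wedge> v = v \<wedge> x \<wedge> v"
proof -
  have "v \<wedge> x \<wedge> v = (v \<wedge> u \<wedge> v) \<wedge> x \<wedge> (v \<wedge> u \<wedge> v)"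
    by (simp only: assms)
  also have "\<dots> = v \<wedge> u \<wedge> x \<wedge> v \<wedge> u \<wedge> v"
    using meet_regular[of v u "x \<wedge> v \<wedge> u"] by (simp add: meet_assoc)
  also have "\<dots> = v \<wedge> u \<wedge> x \<wedge> u \<wedge> v"
    using meet_regular[of v "u \<wedge> x" u] by (simp add: meet_assoc)
  finally show ?thesis ..
qed

end

(* Reopened so that the dual instances of the lemmas above are available. *)
context total_skew_lattice
begin

lemma meet_sandwich_iff_join_sandwich: "x \<wedge> y \<wedge> x = x \<longleftrightarrow> y \<vee> x \<vee> y = y"
  using meet_sandwich_imp_join_sandwich dual.meet_sandwich_imp_join_sandwich by blast

lemma D_rel_update: "D_rel (update x y) x"
proof -
  define u where "u = y \<wedge> x \<wedge> y"
  define a where "a = u \<vee> x \<vee> u"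
  have "u \<wedge> x \<wedge> u = u"
    using meet_regular[of y x "x \<wedge> y \<wedge> x"] meet_regular[of y x x]
    by (simp add: u_def meet_assoc meet_left_idem)
  then have xux: "x \<vee> u \<vee> x = x"
    by (simp add: meet_sandwich_iff_join_sandwich)
  have "x \<vee> a \<vee> x = x"
    using dual.meet_regular[of x u u] xux by (simp add: a_def join_assoc dual.meet_left_idem)
  moreover have "a \<vee> x \<vee> a = a"
    using dual.meet_regular[of u x "x \<vee> u \<vee> x"] dual.meet_regular[of u x x]
    by (simp add: a_def join_assoc dual.meet_left_idem)
  ultimately show ?thesis
    by (simp add: D_rel_def meet_sandwich_iff_join_sandwich update_eq a_def u_def)
qed

lemma sandwich_below_update:
  "(y \<wedge> x \<wedge> y) \<wedge> update x y = y \<wedge> x \<wedge> y"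
  "update x y \<wedge> (y \<wedge> x \<wedge> y) = y \<wedge> x \<wedge> y"
  by (simp add: update_eq meet_join_absorb)
    (simp add: update_eq meet_join_absorb' flip: join_assoc)

lemma meet_sandwich_eq_of_above:
  assumes "a \<wedge> x \<wedge> a = a"
    and "(y \<wedge> x \<wedge> y) \<wedge> a = y \<wedge> x \<wedge> y" and "a \<wedge> (y \<wedge> x \<wedge> y) = y \<wedge> x \<wedge> y"
  shows "y \<wedge> a \<wedge> y = y \<wedge> x \<wedge> y"
proof -
  have "a \<wedge> y \<wedge> x = (a \<wedge> (y \<wedge> x \<wedge> y)) \<wedge> x"
    using meet_idem[of "y \<wedge> x"] by (simp add: meet_assoc)
  also have "\<dots> = (y \<wedge> x \<wedge> y) \<wedge> x"
    by (simp only: assms(3))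
  also have "\<dots> = y \<wedge> x"
    using meet_idem[of "y \<wedge> x"] by (simp add: meet_assoc)
  finally have ayx: "a \<wedge> y \<wedge> x = y \<wedge> x" .
  have aya: "a \<wedge> y \<wedge> a = a \<wedge> y \<wedge> x \<wedge> a"
    using meet_regular[of a y x] assms(1) by simp
  have "y \<wedge> a = y \<wedge> a \<wedge> y \<wedge> a"
    using meet_idem[of "y \<wedge> a"] by (simp add: meet_assoc)
  also have "\<dots> = y \<wedge> a \<wedge> y \<wedge> x \<wedge> a"
    by (simp add: aya)
  also have "\<dots> = y \<wedge> (a \<wedge> y \<wedge> x) \<wedge> a"
    by (simp add: meet_assoc)
  also have "\<dots> = y \<wedge> x \<wedge> a"
    by (simp only: ayx) (simp add: meet_assoc meet_left_idem)
  finally have ya: "y \<wedge> a = y \<wedge> x \<wedge> a" .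
  have "y \<wedge> a \<wedge> y = (y \<wedge> a) \<wedge> y"
    by (simp add: meet_assoc)
  also have "\<dots> = y \<wedge> x \<wedge> a \<wedge> y"
    by (simp add: ya meet_assoc)
  also have "\<dots> = y \<wedge> x \<wedge> y \<wedge> a \<wedge> y"
    by (simp add: meet_regular)
  also have "\<dots> = ((y \<wedge> x \<wedge> y) \<wedge> a) \<wedge> y"
    by (simp add: meet_assoc)
  also have "\<dots> = y \<wedge> x \<wedge> y"
    by (simp only: assms(2)) (simp add: meet_assoc meet_idem)
  finally show ?thesis .
qed

lemma sandwich_absorbs_D_rel_sandwich:
  assumes "D_rel w y"
  shows "(y \<wedge> x \<wedge> y) \<wedge> (w \<wedge> x \<wedge> w) \<wedge> (y \<wedge> x \<wedge> y) = y \<wedge> x \<wedge> y"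
proof -
  have ywy: "y \<wedge> w \<wedge> y = y"
    using assms by (simp add: D_rel_def)
  have wyw: "w \<wedge> y \<wedge> w \<wedge> t = w \<wedge> t" and ywy': "y \<wedge> w \<wedge> y \<wedge> t = y \<wedge> t" for t
    using assms by (simp_all add: D_rel_def flip: meet_assoc)
  have yxwy: "y \<wedge> x \<wedge> w \<wedge> y = y \<wedge> x \<wedge> y"
    using meet_regular[of y x w] ywy by simp
  have ywxy: "y \<wedge> w \<wedge> x \<wedge> y = y \<wedge> x \<wedge> y"
    using meet_regular[of y w x] ywy' by simp
  have "(y \<wedge> x \<wedge> y) \<wedge> (w \<wedge> x \<wedge> w) \<wedge> (y \<wedge> x \<wedge> y)
      = (y \<wedge> x \<wedge> y \<wedge> (w \<wedge> x \<wedge> w) \<wedge> y) \<wedge> x \<wedge> y"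
    by (simp add: meet_assoc)
  also have "\<dots> = (y \<wedge> x \<wedge> (w \<wedge> x \<wedge> w) \<wedge> y) \<wedge> x \<wedge> y"
    by (simp only: meet_regular)
  also have "\<dots> = y \<wedge> x \<wedge> w \<wedge> x \<wedge> y"
    using meet_regular[of y "x \<wedge> w" x] by (simp add: meet_assoc meet_repeat)
  also have "\<dots> = (y \<wedge> x \<wedge> w \<wedge> y) \<wedge> (y \<wedge> w \<wedge> x \<wedge> y)"
    by (simp add: meet_assoc meet_left_idem wyw)
  also have "\<dots> = y \<wedge> x \<wedge> y"
    by (simp add: yxwy ywxy meet_idem)
  finally show ?thesis .
qed

lemma update_update_absorb: "update (update x y) (update y z) = update x (update y z)"
proof -
  define u a w v where "u = y \<wedge> x \<wedge> y" and "a = update x y"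
    and "w = update y z" and "v = w \<wedge> x \<wedge> w"
  have a_eq: "a = u \<vee> x \<vee> u"
    by (simp add: a_def u_def update_eq)
  have "D_rel w y"
    unfolding w_def by (rule D_rel_update)
  then have wyw: "w \<wedge> y \<wedge> w = w"
    by (simp add: D_rel_def)
  have "a \<wedge> x \<wedge> a = a"
    using D_rel_update[of x y] by (simp add: a_def D_rel_def)
  then have yay: "y \<wedge> a \<wedge> y = u"
    unfolding u_def a_def by (intro meet_sandwich_eq_of_above sandwich_below_update)
  have "w \<wedge> a \<wedge> w = w \<wedge> (y \<wedge> a \<wedge> y) \<wedge> w"
    using meet_sandwich_expand[OF wyw, of a] by (simp add: meet_assoc)
  also have "\<dots> = v"
    using meet_sandwich_expand[OF wyw, of x] by (simp add: yay u_def v_def meet_assoc)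
  finally have waw: "w \<wedge> a \<wedge> w = v" .
  have "u \<wedge> v \<wedge> u = u"
    unfolding u_def v_def by (rule sandwich_absorbs_D_rel_sandwich) fact
  then have vuv: "v \<vee> u \<vee> v = v"
    by (simp add: meet_sandwich_iff_join_sandwich)
  have "update a w = v \<vee> a \<vee> v"
    by (simp add: update_eq waw)
  also have "\<dots> = v \<vee> u \<vee> x \<vee> u \<vee> v"
    by (simp add: a_eq join_assoc)
  also have "\<dots> = v \<vee> x \<vee> v"
    using dual.meet_sandwich_expand[OF vuv] .
  also have "\<dots> = update x w"
    by (simp add: update_eq v_def)
  finally show ?thesis
    by (simp add: a_def w_def)
qed

end

lemma skew_lattice_closed:
  assumes "skew_lattice S meet join" and "x \<in> S" and "y \<in> S"
  shows "meet x y \<in> S" and "join x y \<in> S"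
  using assms unfolding skew_lattice_def by blast+

lemma lower_update_closed:
  assumes "skew_lattice S meet join" and "x \<in> S" and "y \<in> S"
  shows "lower_update meet join x y \<in> S"
  unfolding lower_update_def by (intro skew_lattice_closed[OF assms(1)] assms(2,3))

lemma lower_update_cong:
  assumes "skew_lattice S meet join" and "x \<in> S" and "y \<in> S"
    and "\<And>p q. p \<in> S \<Longrightarrow> q \<in> S \<Longrightarrow> meet' p q = meet p q"
    and "\<And>p q. p \<in> S \<Longrightarrow> q \<in> S \<Longrightarrow> join' p q = join p q"
  shows "lower_update meet' join' x y = lower_update meet join x y"
  unfolding lower_update_def using assms by (simp add: skew_lattice_closed)

(* Points outside S are adjoined as a top D-class: there meet is the left and join the right
   projection, and against a point of S the point of S wins under meet and loses under join. *)
lemma skew_lattice_extend: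
  assumes "skew_lattice S meet join"
  obtains meet' join' where "total_skew_lattice meet' join'"
    and "\<And>x y. x \<in> S \<Longrightarrow> y \<in> S \<Longrightarrow> meet' x y = meet x y"
    and "\<And>x y. x \<in> S \<Longrightarrow> y \<in> S \<Longrightarrow> join' x y = join x y"
proof
  define meet' where "meet' x y =
    (if x \<in> S \<and> y \<in> S then meet x y else if x \<in> S then x else if y \<in> S then y else x)" for x y
  define join' where "join' x y =
    (if x \<in> S \<and> y \<in> S then join x y else if x \<in> S then y else if y \<in> S then x else y)" for x y
  show "total_skew_lattice meet' join'"
    using assms unfolding skew_lattice_def
    by unfold_locales (auto simp: meet'_def join'_def)
  show "meet' x y = meet x y" "join' x y = join x y" if "x \<in> S" "y \<in> S" for x y
    using that by (simp_all add: meet'_def join'_def)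
qed

theorem mainTheorem2:
  assumes "skew_lattice S meet join"
    and "x \<in> S" and "y \<in> S" and "z \<in> S"
  shows "lower_update meet join (lower_update meet join x y) (lower_update meet join y z)
         = lower_update meet join x (lower_update meet join y z)"
proof -
  obtain meet' join' where sl: "total_skew_lattice meet' join'"
    and meet': "\<And>x y. x \<in> S \<Longrightarrow> y \<in> S \<Longrightarrow> meet' x y = meet x y"
    and join': "\<And>x y. x \<in> S \<Longrightarrow> y \<in> S \<Longrightarrow> join' x y = join x y"
    using skew_lattice_extend[OF assms(1)] by blast
  have update: "lower_update meet' join' p q = lower_update meet join p q" if "p \<in> S" "q \<in> S" for p q
    using lower_update_cong[OF assms(1) that meet' join'] .
  show ?thesis
    using total_skew_lattice.update_update_absorb[OF sl, of x y z] assms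
    by (simp add: update lower_update_closed)
qed

end
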